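(* For positive integers $\ell'\le \ell$, \[ \frac{1}{\ell}\,\mathbb{E}|\mathscr{L}(\mathbf{X}_\ell)| \le \frac{1}{\ell'}\,\mathbb{E}|\mathscr{L}(\mathbf{X}_{\ell'})|. \]
   Context: Let $X_1,X_2,\dots$ be independent random variables with $X_j$ Poisson distributed with parameter $1/j$, and $\mathbf{X}_k=(X_1,\dots,X_k)$. For a finite list $\mathbf{c}=(c_1,\dots,c_k)$ of non-negative integers, $\mathscr{L}(\mathbf{c}) = \{m_1+2m_2+\cdots+km_k : 0\le m_j\le c_j \text{ for } j=1,\dots,k\}$, and $|\cdot|$ denotes cardinality. *)

theory Defs
  imports "HOL-Probability.Probability"
begin

text \<open>The set of subsums of a list c = (c_1,...,c_k), encoded as a function
  c :: nat => nat whose relevant values are c 1, ..., c k.\<close>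
definition subsums :: "nat \<Rightarrow> (nat \<Rightarrow> nat) \<Rightarrow> nat set" where
  "subsums k c = {(\<Sum>j\<in>{1..k}. j * m j) | m. \<forall>j\<in>{1..k}. m j \<le> c j}"

text \<open>Joint law of X_k = (X_1,...,X_k), X_j independent Poisson(1/j);
  coordinates outside {1..k} are fixed to 0.\<close>
definition X_pmf :: "nat \<Rightarrow> (nat \<Rightarrow> nat) pmf" where
  "X_pmf k = Pi_pmf {1..k} 0 (\<lambda>j. poisson_pmf (1 / real j))"

definition expected_card :: "nat \<Rightarrow> real" where
  "expected_card k = measure_pmf.expectation (X_pmf k) (\<lambda>c. real (card (subsums k c)))"

end

theory Submission
  imports Defs
begin

text \<open>Appending a coordinate \<open>c\<^sub>k\<^sub>+\<^sub>1\<close> multiplies the number of subsums by at most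
  \<open>1 + c\<^sub>k\<^sub>+\<^sub>1\<close>. As \<open>X\<^sub>k\<^sub>+\<^sub>1\<close> is independent of \<open>X\<^sub>1, \<dots>, X\<^sub>k\<close> with mean \<open>1/(k+1)\<close>, the expected
  number of subsums grows at most by the factor \<open>1 + 1/(k+1)\<close> from \<open>k\<close> to \<open>k+1\<close>, and
  \<open>(1 + 1/(k+1))/(k+1) \<le> 1/k\<close> makes its ratio to \<open>k\<close> non-increasing.\<close>

lemma nn_integral_poisson_pmf_id:
  assumes "0 < r"
  shows "(\<integral>\<^sup>+y. ennreal (real y) \<partial>poisson_pmf r) = ennreal r"
proof -
  define f where "f = (\<lambda>n::nat. real n * (r ^ n / fact n * exp (-r)))"
  have f_Suc: "f (Suc n) = (r * exp (-r)) * (r ^ n /\<^sub>R fact n)" for n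
  proof -
    have "fact (Suc n) = (real n + 1) * (fact n :: real)" by (simp add: fact_Suc)
    moreover have "(fact n :: real) > 0" by simp
    ultimately show ?thesis by (simp add: f_def divide_simps)
  qed
  have "(\<lambda>n. f (Suc n)) sums ((r * exp (-r)) * exp r)"
    unfolding f_Suc by (rule sums_mult[OF exp_converges])
  moreover have "(r * exp (-r)) * exp r = r" by (simp add: mult.assoc flip: exp_add)
  moreover have "f 0 = 0" by (simp add: f_def)
  ultimately have "f sums r" using sums_Suc_iff[of f r] by simp
  have "(\<integral>\<^sup>+y. ennreal (real y) \<partial>poisson_pmf r) = (\<integral>\<^sup>+y. ennreal (f y) \<partial>count_space UNIV)"
    using assms by (simp add: nn_integral_measure_pmf f_def ennreal_mult'[symmetric] mult.commute)
  also have "\<dots> = (\<Sum>y. ennreal (f y))" by (rule nn_integral_count_space_nat)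
  also have "\<dots> = ennreal r"
    using \<open>f sums r\<close> assms by (intro suminf_ennreal_eq) (auto simp: f_def)
  finally show ?thesis .
qed

lemma nn_integral_poisson_pmf_Suc:
  assumes "0 < r"
  shows "(\<integral>\<^sup>+y. ennreal (real (Suc y)) \<partial>poisson_pmf r) = ennreal (1 + r)"
proof -
  have "(\<integral>\<^sup>+y. ennreal (real (Suc y)) \<partial>poisson_pmf r) = (\<integral>\<^sup>+y. 1 + ennreal (real y) \<partial>poisson_pmf r)"
    by (intro nn_integral_cong) (simp add: ennreal_plus)
  also have "\<dots> = 1 + ennreal r"
    using assms by (simp add: nn_integral_add nn_integral_poisson_pmf_id)
  finally show ?thesis using assms by (simp add: ennreal_plus)
qed

lemma X_pmf_Suc:
  "X_pmf (Suc k) =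
     map_pmf (\<lambda>(y, c). c(Suc k := y)) (pair_pmf (poisson_pmf (1 / real (Suc k))) (X_pmf k))"
  unfolding X_pmf_def by (subst Pi_pmf_insert[symmetric]) (auto simp: atLeastAtMostSuc_conv)

lemma finite_subsums: "finite (subsums k c)"
proof (rule finite_subset)
  show "subsums k c \<subseteq> {..(\<Sum>j\<in>{1..k}. j * c j)}"
    by (auto simp: subsums_def intro!: sum_mono)
qed simp

lemma subsums_fun_upd_Suc: "subsums k (c(Suc k := y)) = subsums k c"
  unfolding subsums_def by auto

lemma subsums_Suc_subset:
  "subsums (Suc k) c \<subseteq> (\<lambda>(s, t). s + Suc k * t) ` (subsums k c \<times> {..c (Suc k)})"
proof
  fix x assume "x \<in> subsums (Suc k) c"
  then obtain m where x: "x = (\<Sum>j\<in>{1..Suc k}. j * m j)" and m: "\<forall>j\<in>{1..Suc k}. m j \<le> c j"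
    by (auto simp: subsums_def)
  have "x = (\<Sum>j\<in>{1..k}. j * m j) + Suc k * m (Suc k)"
    using x by (simp add: sum.cl_ivl_Suc)
  moreover have "(\<Sum>j\<in>{1..k}. j * m j) \<in> subsums k c"
    using m by (auto simp: subsums_def)
  moreover have "m (Suc k) \<le> c (Suc k)" using m by auto
  ultimately show "x \<in> (\<lambda>(s, t). s + Suc k * t) ` (subsums k c \<times> {..c (Suc k)})"
    by force
qed

lemma card_subsums_Suc_le: "card (subsums (Suc k) c) \<le> Suc (c (Suc k)) * card (subsums k c)"
proof -
  have "card (subsums (Suc k) c) \<le> card ((\<lambda>(s, t). s + Suc k * t) ` (subsums k c \<times> {..c (Suc k)}))"
    by (intro card_mono subsums_Suc_subset) (simp add: finite_subsums)
  also have "\<dots> \<le> card (subsums k c \<times> {..c (Suc k)})"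
    by (rule card_image_le) (simp add: finite_subsums)
  finally show ?thesis by (simp add: card_cartesian_product mult.commute)
qed

definition expected_card_nn :: "nat \<Rightarrow> ennreal" where
  "expected_card_nn k = (\<integral>\<^sup>+c. ennreal (real (card (subsums k c))) \<partial>X_pmf k)"

lemma expected_card_nn_0: "expected_card_nn 0 = 1"
proof -
  have "subsums 0 c = {0}" for c by (auto simp: subsums_def)
  thus ?thesis by (simp add: expected_card_nn_def)
qed

lemma expected_card_nn_Suc_le:
  "expected_card_nn (Suc k) \<le> ennreal (1 + 1 / real (Suc k)) * expected_card_nn k"
proof -
  let ?Y = "poisson_pmf (1 / real (Suc k))"
  have "expected_card_nn (Suc k) =
      (\<integral>\<^sup>+y. \<integral>\<^sup>+c. ennreal (real (card (subsums (Suc k) (c(Suc k := y))))) \<partial>X_pmf k \<partial>?Y)"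
    unfolding expected_card_nn_def X_pmf_Suc by (simp add: nn_integral_pair_pmf')
  also have "\<dots> \<le> (\<integral>\<^sup>+y. \<integral>\<^sup>+c. ennreal (real (Suc y)) * ennreal (real (card (subsums k c))) \<partial>X_pmf k \<partial>?Y)"
  proof (intro nn_integral_mono)
    fix y c
    have "card (subsums (Suc k) (c(Suc k := y))) \<le> Suc y * card (subsums k c)"
      using card_subsums_Suc_le[of k "c(Suc k := y)"] by (simp add: subsums_fun_upd_Suc)
    then have "real (card (subsums (Suc k) (c(Suc k := y)))) \<le> real (Suc y) * real (card (subsums k c))"
      by (metis of_nat_le_iff of_nat_mult)
    then show "ennreal (real (card (subsums (Suc k) (c(Suc k := y)))))
        \<le> ennreal (real (Suc y)) * ennreal (real (card (subsums k c)))"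
      by (simp add: ennreal_leI flip: ennreal_mult del: of_nat_Suc)
  qed
  also have "\<dots> = (\<integral>\<^sup>+y. ennreal (real (Suc y)) \<partial>?Y) * expected_card_nn k"
    by (simp add: nn_integral_cmult nn_integral_multc expected_card_nn_def del: of_nat_Suc)
  also have "\<dots> = ennreal (1 + 1 / real (Suc k)) * expected_card_nn k"
    by (simp add: nn_integral_poisson_pmf_Suc del: of_nat_Suc)
  finally show ?thesis .
qed

lemma expected_card_nn_finite: "expected_card_nn k < \<top>"
proof (induction k)
  case 0 thus ?case by (simp add: expected_card_nn_0)
next
  case (Suc k)
  have "expected_card_nn (Suc k) \<le> ennreal (1 + 1 / real (Suc k)) * expected_card_nn k"
    by (rule expected_card_nn_Suc_le)
  also have "\<dots> < \<top>" using Suc by (simp add: ennreal_mult_less_top)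
  finally show ?case .
qed

lemma expected_card_eq_enn2real: "expected_card k = enn2real (expected_card_nn k)"
  unfolding expected_card_def expected_card_nn_def
  by (rule integral_eq_nn_integral) auto

lemma expected_card_nonneg: "0 \<le> expected_card k"
  by (simp add: expected_card_eq_enn2real)

lemma expected_card_Suc_le: "expected_card (Suc k) \<le> (1 + 1 / real (Suc k)) * expected_card k"
proof -
  have "enn2real (expected_card_nn (Suc k))
      \<le> enn2real (ennreal (1 + 1 / real (Suc k)) * expected_card_nn k)"
    using expected_card_nn_Suc_le expected_card_nn_finite
    by (intro enn2real_mono) (auto simp: ennreal_mult_less_top)
  thus ?thesis by (simp add: expected_card_eq_enn2real enn2real_mult del: ennreal_plus)
qed

lemma Suc_factor_over_Suc_le:
  fixes k :: nat
  assumes "0 < k"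
  shows "(1 + 1 / real (Suc k)) / real (Suc k) \<le> 1 / real k"
proof -
  have "real k * (real k + 2) \<le> (real k + 1)\<^sup>2" by (simp add: power2_eq_square algebra_simps)
  thus ?thesis using assms by (simp add: divide_simps) (simp add: algebra_simps power2_eq_square)
qed

lemma expected_card_over_Suc_le:
  assumes "0 < k"
  shows "expected_card (Suc k) / real (Suc k) \<le> expected_card k / real k"
proof -
  have "expected_card (Suc k) / real (Suc k)
      \<le> (1 + 1 / real (Suc k)) * expected_card k / real (Suc k)"
    using expected_card_Suc_le by (simp add: divide_right_mono)
  also have "\<dots> = expected_card k * ((1 + 1 / real (Suc k)) / real (Suc k))" by simp
  also have "\<dots> \<le> expected_card k * (1 / real k)"
    by (intro mult_left_mono Suc_factor_over_Suc_le assms expected_card_nonneg)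
  finally show ?thesis by simp
qed

theorem lemma3p2:
  fixes l l' :: nat
  assumes "0 < l'" and "l' \<le> l"
  shows "expected_card l / real l \<le> expected_card l' / real l'"
  using assms(2)
proof (induction l rule: dec_induct)
  case base thus ?case by simp
next
  case (step n)
  with assms(1) have "0 < n" by simp
  with step.IH show ?case using expected_card_over_Suc_le[of n] by linarith
qed

end
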